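(* Let $d\in\mathbb N$, $\mu_0$ a probability measure on $\mathbb R^d$ with Lebesgue density $\pi_0\in C^4(\mathbb R^d,\mathbb R)$, $S_0=\{\pi_0>0\}$, and $\Phi:\mathbb R^d\to\mathbb R$. Let $\mu_n(dx)=Z_n^{-1}\exp(-n\Phi(x))\mu_0(dx)$, $Z_n=\int\exp(-n\Phi)d\mu_0$. Assume: there is $x_\star$ in the interior of $S_0$ such that for every $r>0$, $\inf_{x\in S_0,\|x-x_\star\|>r}\Phi(x)-\Phi(x_\star)>0$; $\Phi$ is five times continuously differentiable in a neighborhood of $x_\star$ and $\nabla^2\Phi(x_\star)$ is positive definite; $\pi_0(x_\star)\neq0$. Let $f\in C^4(\mathbb R^d,\mathbb R)\cap L^1_{\mu_0}(\mathbb R)$ with $\nabla f(x_\star)\ne0$, and assume the integrals $\int_{S_0}|g(x)|e^{-n\Phi(x)}dx$ are finite for all $n$ and $g\in\{\pi_0,f\pi_0,f^2\pi_0\}$. Then there exists $\tilde c_f>0$ with $$\sigma^2_{\mu_n,\mu_0}(f)\sim\tilde c_f\,n^{d/2-1}\quad(n\to\infty),$$ and there exists another constant $\tilde c_f'>0$ with $\sigma^2_{\mu_n,\mu_0}(f)/\mathrm{Var}_{\mu_n}(f)\sim\tilde c_f' n^{d/2}$.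
   Context: For probability measures $\mu\ll\nu$ and $f$, the asymptotic variance of self-normalized importance sampling is $\sigma^2_{\mu,\nu}(f)=\mathbb E_\nu\big[(\tfrac{d\mu}{d\nu})^2(f-\mathbb E_\mu[f])^2\big]$. $g(n)\sim h(n)$ means $\lim_{n\to\infty}g(n)/h(n)=1$. $\mathrm{Var}_{\mu_n}(f)=\mathbb E_{\mu_n}[f^2]-\mathbb E_{\mu_n}[f]^2$. *)

theory Defs
  imports "HOL-Probability.Probability" "HOL-Library.Landau_Symbols"
begin

fun Ck_on :: "nat \<Rightarrow> 'a::euclidean_space set \<Rightarrow> ('a \<Rightarrow> real) \<Rightarrow> bool" where
  "Ck_on 0 U f = continuous_on U f"
| "Ck_on (Suc k) U f = (f differentiable_on U \<and>
      (\<forall>b\<in>Basis. Ck_on k U (\<lambda>x. frechet_derivative f (at x) b)))"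

definition hessian_entry :: "('a::euclidean_space \<Rightarrow> real) \<Rightarrow> 'a \<Rightarrow> 'a \<Rightarrow> 'a \<Rightarrow> real" where
  "hessian_entry F x u v = frechet_derivative (\<lambda>y. frechet_derivative F (at y) u) (at x) v"

definition hessian_pos_def :: "('a::euclidean_space \<Rightarrow> real) \<Rightarrow> 'a \<Rightarrow> bool" where
  "hessian_pos_def F x = (\<forall>v. v \<noteq> 0 \<longrightarrow>
      (\<Sum>i\<in>Basis. \<Sum>j\<in>Basis. (v \<bullet> i) * (v \<bullet> j) * hessian_entry F x i j) > 0)"

text \<open>Asymptotic variance of self-normalised importance sampling (target mu, proposal nu).\<close>
definition snis_asym_var :: "'a measure \<Rightarrow> 'a measure \<Rightarrow> ('a \<Rightarrow> real) \<Rightarrow> real" where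
  "snis_asym_var \<mu> \<nu> f =
     (\<integral>x. (enn2real (RN_deriv \<nu> \<mu> x))\<^sup>2 * (f x - (\<integral>y. f y \<partial>\<mu>))\<^sup>2 \<partial>\<nu>)"

definition var_meas :: "'a measure \<Rightarrow> ('a \<Rightarrow> real) \<Rightarrow> real" where
  "var_meas \<mu> f = (\<integral>x. (f x)\<^sup>2 \<partial>\<mu>) - (\<integral>x. f x \<partial>\<mu>)\<^sup>2"

definition prior :: "('a::euclidean_space \<Rightarrow> real) \<Rightarrow> 'a measure" where
  "prior pi0 = density lborel (\<lambda>x. ennreal (pi0 x))"

definition Zn :: "('a::euclidean_space \<Rightarrow> real) \<Rightarrow> ('a \<Rightarrow> real) \<Rightarrow> nat \<Rightarrow> real" where
  "Zn pi0 \<Phi> n = (\<integral>x. exp (- real n * \<Phi> x) \<partial>(prior pi0))"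

definition post :: "('a::euclidean_space \<Rightarrow> real) \<Rightarrow> ('a \<Rightarrow> real) \<Rightarrow> nat \<Rightarrow> 'a measure" where
  "post pi0 \<Phi> n = density (prior pi0) (\<lambda>x. ennreal (exp (- real n * \<Phi> x) / Zn pi0 \<Phi> n))"

end

theory Submission
  imports Defs "HOL-Real_Asymp.Real_Asymp"
begin

text \<open>
  Write \<open>gap = \<Phi> - \<Phi> xs\<close> and consider the tilted moments
  \<open>moment k j = \<integral> pi0 x * exp (- k * gap x) * (f x - f xs) ^ j dx\<close>. The posterior mean and
  variance of \<open>f\<close> are rational functions of \<open>moment n j\<close>, \<open>j \<le> 2\<close>, and so is the asymptotic
  variance of self-normalised importance sampling, where the squared density ratio turns the
  tilt \<open>n\<close> into \<open>2 n\<close>. Laplace's method gives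
  \<open>n powr ((d + j) / 2) * moment (m * n) j \<longrightarrow> pi0 xs * \<integral> exp (- m * Q y / 2) * (Df y) ^ j dy\<close>,
  with \<open>Q\<close> the Hessian form of \<open>\<Phi>\<close> at \<open>xs\<close> and \<open>Df\<close> the derivative of \<open>f\<close> there: substitute
  \<open>x = xs + y / sqrt n\<close> on a small ball, where \<open>gap\<close> grows quadratically and dominated
  convergence applies, while the separation hypothesis makes the rest exponentially small.
  The Gaussian limit vanishes for \<open>j = 1\<close> by symmetry and is positive for \<open>j \<in> {0, 2}\<close>
  because \<open>Df \<noteq> 0\<close>; substituting the limits yields the orders \<open>n powr (d / 2 - 1)\<close> and
  \<open>1 / n\<close> for the two variances.
\<close>

section \<open>Smoothness classes and derivatives along lines\<close>

lemma Ck_on_imp_continuous_on: "Ck_on k U g \<Longrightarrow> continuous_on U g"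
  by (cases k) (auto intro: differentiable_imp_continuous_on)

lemma Ck_on_Suc_imp_Ck_on: "Ck_on (Suc k) U g \<Longrightarrow> Ck_on k U g"
proof (induction k arbitrary: g)
  case 0
  then show ?case by (auto intro: differentiable_imp_continuous_on)
next
  case (Suc k)
  then show ?case by auto
qed

lemma Ck_on_mono: "Ck_on k U g \<Longrightarrow> j \<le> k \<Longrightarrow> Ck_on j U g"
proof (induction k)
  case 0
  then show ?case by simp
next
  case (Suc k)
  then show ?case
    by (metis Ck_on_Suc_imp_Ck_on le_Suc_eq)
qed

lemma Ck_on_Suc_imp_differentiable:
  "Ck_on (Suc k) U g \<Longrightarrow> open U \<Longrightarrow> x \<in> U \<Longrightarrow> g differentiable at x"
  by (auto simp: differentiable_on_eq_differentiable_at)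

lemma Ck_on_2_continuous_hessian_entry:
  "Ck_on 2 U F \<Longrightarrow> b \<in> Basis \<Longrightarrow> c \<in> Basis \<Longrightarrow> continuous_on U (\<lambda>y. hessian_entry F y b c)"
  by (simp add: numeral_2_eq_2 hessian_entry_def)

lemma continuous_on_cball_bounded_above:
  fixes g :: "'a::euclidean_space \<Rightarrow> real"
  assumes "continuous_on (cball x r) g"
  shows "\<exists>M. \<forall>z\<in>cball x r. g z \<le> M"
proof -
  have "bounded (g ` cball x r)"
    using assms by (intro compact_imp_bounded compact_continuous_image compact_cball)
  then show ?thesis
    by (force simp: bounded_real dest: abs_le_D1)
qed

lemma frechet_derivative_eq_sum_Basis:
  fixes g :: "'a::euclidean_space \<Rightarrow> real"
  assumes "g differentiable at x"
  shows "frechet_derivative g (at x) h = (\<Sum>b\<in>Basis. (h \<bullet> b) * frechet_derivative g (at x) b)"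
proof -
  interpret L: bounded_linear "frechet_derivative g (at x)"
    using assms frechet_derivative_works has_derivative_bounded_linear by blast
  have "frechet_derivative g (at x) h = frechet_derivative g (at x) (\<Sum>b\<in>Basis. (h \<bullet> b) *\<^sub>R b)"
    by (simp add: euclidean_representation)
  then show ?thesis
    by (simp add: L.sum L.scaleR)
qed

lemma has_real_derivative_along_line:
  fixes g :: "'a::euclidean_space \<Rightarrow> real"
  assumes "g differentiable at (x + t *\<^sub>R h)"
  shows "((\<lambda>s. g (x + s *\<^sub>R h)) has_real_derivative frechet_derivative g (at (x + t *\<^sub>R h)) h) (at t)"
proof -
  let ?D = "frechet_derivative g (at (x + t *\<^sub>R h))"
  have gD: "(g has_derivative ?D) (at (x + t *\<^sub>R h))"
    using assms frechet_derivative_works by blast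
  interpret L: bounded_linear ?D
    using gD has_derivative_bounded_linear by blast
  have "((\<lambda>s. x + s *\<^sub>R h) has_derivative (\<lambda>s. s *\<^sub>R h)) (at t)"
    by (auto intro!: derivative_eq_intros)
  from has_derivative_compose[OF this gD]
  have "((\<lambda>s. g (x + s *\<^sub>R h)) has_derivative (\<lambda>s. ?D (s *\<^sub>R h))) (at t)" .
  moreover have "(\<lambda>s. ?D (s *\<^sub>R h)) = (*) (?D h)"
    by (simp add: L.scaleR fun_eq_iff mult.commute)
  ultimately show ?thesis
    by (simp add: has_field_derivative_def)
qed

lemma rescaled_difference_quotient_limit:
  fixes g :: "'a::euclidean_space \<Rightarrow> real"
  assumes "g differentiable at x"
  shows "(\<lambda>n. sqrt (real n) * (g (x + inverse (sqrt (real n)) *\<^sub>R y) - g x))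
           \<longlonglongrightarrow> frechet_derivative g (at x) y"
proof -
  have "((\<lambda>s. g (x + s *\<^sub>R y)) has_real_derivative frechet_derivative g (at x) y) (at 0)"
    using has_real_derivative_along_line[of g x 0 y] assms by simp
  then have lim: "((\<lambda>s. (g (x + s *\<^sub>R y) - g x) / s) \<longlongrightarrow> frechet_derivative g (at x) y) (at 0)"
    by (simp add: DERIV_def)
  have "(\<lambda>n. inverse (sqrt (real n))) \<longlonglongrightarrow> 0"
    by real_asymp
  moreover have "eventually (\<lambda>n. inverse (sqrt (real n)) \<in> - {0}) sequentially"
    using eventually_gt_at_top[of "0::nat"] by eventually_elim simp
  ultimately have "filterlim (\<lambda>n. inverse (sqrt (real n))) (at 0) sequentially"
    by (simp add: filterlim_at)
  from filterlim_compose[OF lim this] show ?thesis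
    by (simp add: divide_inverse mult.commute)
qed

lemma C1_lipschitz_on_cball:
  fixes g :: "'a::euclidean_space \<Rightarrow> real"
  assumes g: "Ck_on 1 UNIV g"
  shows "\<exists>L\<ge>0. \<forall>z\<in>cball x r. \<bar>g z - g x\<bar> \<le> L * norm (z - x)"
proof -
  have g_diff: "g differentiable at z" for z
    using Ck_on_Suc_imp_differentiable[of 0 UNIV g] g by simp
  define G where "G z = (\<Sum>b\<in>Basis. \<bar>frechet_derivative g (at z) b\<bar>)" for z
  have "continuous_on (cball x r) G"
    using g unfolding G_def by (intro continuous_intros) (auto intro: continuous_on_subset)
  then obtain M where M: "\<And>z. z \<in> cball x r \<Longrightarrow> G z \<le> M"
    using continuous_on_cball_bounded_above by blast
  have "\<bar>g z - g x\<bar> \<le> max M 0 * norm (z - x)" if z: "z \<in> cball x r" for z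
  proof -
    define h where "h = z - x"
    have "\<And>t. 0 \<le> t \<Longrightarrow> t \<le> 1 \<Longrightarrow>
        ((\<lambda>s. g (x + s *\<^sub>R h)) has_real_derivative frechet_derivative g (at (x + t *\<^sub>R h)) h) (at t)"
      using has_real_derivative_along_line g_diff by blast
    from MVT2[OF zero_less_one this] obtain t where t: "0 < t" "t < 1"
        "g (x + 1 *\<^sub>R h) - g (x + 0 *\<^sub>R h) = (1 - 0) * frechet_derivative g (at (x + t *\<^sub>R h)) h"
      by blast
    have "x + t *\<^sub>R h \<in> cball x r"
      using z t mult_left_le_one_le[of "norm h" t]
      by (simp add: h_def dist_norm norm_minus_commute)
    have "\<bar>frechet_derivative g (at (x + t *\<^sub>R h)) h\<bar>
        \<le> (\<Sum>b\<in>Basis. \<bar>h \<bullet> b\<bar> * \<bar>frechet_derivative g (at (x + t *\<^sub>R h)) b\<bar>)"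
      unfolding frechet_derivative_eq_sum_Basis[OF g_diff[of "x + t *\<^sub>R h"], of h]
      by (rule order.trans[OF sum_abs]) (simp add: abs_mult)
    also have "\<dots> \<le> (\<Sum>b\<in>Basis. norm h * \<bar>frechet_derivative g (at (x + t *\<^sub>R h)) b\<bar>)"
      by (intro sum_mono mult_right_mono Basis_le_norm) auto
    also have "\<dots> = norm h * G (x + t *\<^sub>R h)"
      by (simp add: G_def sum_distrib_left)
    also have "\<dots> \<le> norm h * max M 0"
      using M[OF \<open>x + t *\<^sub>R h \<in> cball x r\<close>] by (intro mult_left_mono) auto
    finally have "\<bar>frechet_derivative g (at (x + t *\<^sub>R h)) h\<bar> \<le> norm h * max M 0" .
    then show ?thesis
      using t by (simp add: h_def mult.commute)
  qed
  then show ?thesis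
    by (intro exI[of _ "max M 0"]) auto
qed

section \<open>Quadratic forms and second-order Taylor expansion\<close>

definition quad_form :: "('a::euclidean_space \<Rightarrow> 'a \<Rightarrow> real) \<Rightarrow> 'a \<Rightarrow> real" where
  "quad_form H h = (\<Sum>b\<in>Basis. \<Sum>c\<in>Basis. (h \<bullet> b) * (h \<bullet> c) * H b c)"

lemma hessian_pos_def_iff_quad_form:
  "hessian_pos_def F x \<longleftrightarrow> (\<forall>v. v \<noteq> 0 \<longrightarrow> quad_form (hessian_entry F x) v > 0)"
  by (simp add: hessian_pos_def_def quad_form_def)

lemma quad_form_scaleR: "quad_form H (a *\<^sub>R h) = a\<^sup>2 * quad_form H h"
  by (simp add: quad_form_def sum_distrib_left power2_eq_square algebra_simps)

lemma quad_form_minus: "quad_form H (- h) = quad_form H h"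
  using quad_form_scaleR[of H "-1" h] by simp

lemma continuous_on_quad_form: "continuous_on S (quad_form H)"
  unfolding quad_form_def by (intro continuous_intros)

lemma borel_measurable_quad_form [measurable]: "quad_form H \<in> borel_measurable borel"
  by (rule borel_measurable_continuous_onI[OF continuous_on_quad_form])

lemma quad_form_coercive:
  fixes H :: "'a::euclidean_space \<Rightarrow> 'a \<Rightarrow> real"
  assumes pos: "\<And>h. h \<noteq> 0 \<Longrightarrow> quad_form H h > 0"
  shows "\<exists>\<kappa>>0. \<forall>h. \<kappa> * (norm h)\<^sup>2 \<le> quad_form H h"
proof -
  obtain b :: 'a where "b \<in> Basis"
    using nonempty_Basis by blast
  then have "sphere (0::'a) 1 \<noteq> {}"
    by (auto intro!: exI[of _ b])
  then obtain u where u: "u \<in> sphere 0 1" "\<And>v. v \<in> sphere 0 1 \<Longrightarrow> quad_form H u \<le> quad_form H v"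
    using continuous_attains_inf[OF compact_sphere _ continuous_on_quad_form] by blast
  have "quad_form H u * (norm h)\<^sup>2 \<le> quad_form H h" for h
  proof (cases "h = 0")
    case True
    then show ?thesis by (simp add: quad_form_def)
  next
    case False
    have "quad_form H h = (norm h)\<^sup>2 * quad_form H (inverse (norm h) *\<^sub>R h)"
      using False quad_form_scaleR[of H "norm h" "inverse (norm h) *\<^sub>R h"] by simp
    also have "\<dots> \<ge> (norm h)\<^sup>2 * quad_form H u"
      using u(2) False by (intro mult_left_mono) auto
    finally show ?thesis
      by (simp add: mult.commute)
  qed
  moreover have "quad_form H u > 0"
    using u(1) by (intro pos) auto
  ultimately show ?thesis by blast
qed

lemma quad_form_diff_le:
  fixes H H' :: "'a::euclidean_space \<Rightarrow> 'a \<Rightarrow> real"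
  assumes close: "\<And>b c. b \<in> Basis \<Longrightarrow> c \<in> Basis \<Longrightarrow> \<bar>H b c - H' b c\<bar> \<le> e"
  shows "\<bar>quad_form H h - quad_form H' h\<bar> \<le> real DIM('a) ^ 2 * e * (norm h)\<^sup>2"
proof -
  have term_le: "\<bar>(h \<bullet> b) * (h \<bullet> c) * (H b c - H' b c)\<bar> \<le> (norm h)\<^sup>2 * e"
    if "b \<in> Basis" "c \<in> Basis" for b c
  proof -
    have "\<bar>h \<bullet> b\<bar> \<le> norm h" "\<bar>h \<bullet> c\<bar> \<le> norm h"
      using that by (auto intro: Basis_le_norm)
    with close[OF that] show ?thesis
      by (auto simp: abs_mult power2_eq_square intro!: mult_mono)
  qed
  have "quad_form H h - quad_form H' h
      = (\<Sum>b\<in>Basis. \<Sum>c\<in>Basis. (h \<bullet> b) * (h \<bullet> c) * (H b c - H' b c))"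
    by (simp add: quad_form_def algebra_simps sum_subtractf)
  also have "\<bar>\<dots>\<bar> \<le> (\<Sum>b\<in>(Basis::'a set). \<Sum>c\<in>(Basis::'a set). (norm h)\<^sup>2 * e)"
    using term_le by (intro order.trans[OF sum_abs] sum_mono order.trans[OF sum_abs]) auto
  also have "\<dots> = real DIM('a) ^ 2 * e * (norm h)\<^sup>2"
    by (simp add: power2_eq_square)
  finally show ?thesis .
qed

lemma taylor_at_critical_point:
  fixes F :: "'a::euclidean_space \<Rightarrow> real"
  assumes F: "Ck_on 2 U F" "open U"
    and seg: "\<And>t. 0 \<le> t \<Longrightarrow> t \<le> 1 \<Longrightarrow> x + t *\<^sub>R h \<in> U"
    and crit: "frechet_derivative F (at x) = (\<lambda>_. 0)"
  shows "\<exists>t. 0 < t \<and> t < 1 \<and> F (x + h) - F x = quad_form (hessian_entry F (x + t *\<^sub>R h)) h / 2"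
proof -
  define D where "D b y = frechet_derivative F (at y) b" for b y
  define g where "g s = F (x + s *\<^sub>R h)" for s
  define g1 where "g1 s = (\<Sum>b\<in>Basis. (h \<bullet> b) * D b (x + s *\<^sub>R h))" for s
  define g2 where "g2 s = quad_form (hessian_entry F (x + s *\<^sub>R h)) h" for s
  define diff where "diff m = (if m = 0 then g else if m = 1 then g1 else g2)" for m :: nat
  have F_diff: "F differentiable at y" if "y \<in> U" for y
    using F that by (auto simp: numeral_2_eq_2 differentiable_on_eq_differentiable_at)
  have D_diff: "D b differentiable at y" if "y \<in> U" "b \<in> Basis" for y b
    using F that by (auto simp: numeral_2_eq_2 D_def[abs_def] differentiable_on_eq_differentiable_at)
  have d1: "(g has_real_derivative g1 t) (at t)" if "0 \<le> t" "t \<le> 1" for t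
    using has_real_derivative_along_line[OF F_diff[OF seg[OF that]]]
    unfolding frechet_derivative_eq_sum_Basis[OF F_diff[OF seg[OF that]], of h]
    by (simp add: g_def[abs_def] g1_def D_def)
  have d2: "(g1 has_real_derivative g2 t) (at t)" if "0 \<le> t" "t \<le> 1" for t
  proof -
    have "((\<lambda>s. D b (x + s *\<^sub>R h)) has_real_derivative
            (\<Sum>c\<in>Basis. (h \<bullet> c) * hessian_entry F (x + t *\<^sub>R h) b c)) (at t)" if b: "b \<in> Basis" for b
      using has_real_derivative_along_line[OF D_diff[OF seg[OF \<open>0 \<le> t\<close> \<open>t \<le> 1\<close>] b]]
        frechet_derivative_eq_sum_Basis[OF D_diff[OF seg[OF \<open>0 \<le> t\<close> \<open>t \<le> 1\<close>] b], of h]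
      by (simp add: hessian_entry_def D_def[abs_def])
    then have "(g1 has_real_derivative
        (\<Sum>b\<in>Basis. (h \<bullet> b) * (\<Sum>c\<in>Basis. (h \<bullet> c) * hessian_entry F (x + t *\<^sub>R h) b c))) (at t)"
      unfolding g1_def[abs_def] by (intro DERIV_sum DERIV_cmult) auto
    then show ?thesis
      by (simp add: g2_def quad_form_def sum_distrib_left mult.assoc)
  qed
  have "\<exists>t. 0 < t \<and> t < 1 \<and> g 1 = (\<Sum>m<2. diff m 0 / fact m * 1 ^ m) + diff 2 t / fact 2 * 1 ^ 2"
    by (rule Maclaurin) (auto simp: diff_def d1 d2 less_2_cases_iff)
  then obtain t where "0 < t" "t < 1" "g 1 = g 0 + g1 0 + g2 t / 2"
    by (auto simp: diff_def numeral_2_eq_2)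
  moreover have "g1 0 = 0"
    using crit by (simp add: g1_def D_def)
  ultimately show ?thesis
    by (intro exI[of _ t]) (auto simp: g_def g2_def)
qed

lemma taylor_little_o_at_critical_point:
  fixes F :: "'a::euclidean_space \<Rightarrow> real"
  assumes F: "Ck_on 2 U F" "open U" "x \<in> U"
    and crit: "frechet_derivative F (at x) = (\<lambda>_. 0)"
    and \<epsilon>: "\<epsilon> > 0"
  shows "\<exists>\<rho>>0. \<forall>h. norm h < \<rho> \<longrightarrow>
           \<bar>F (x + h) - F x - quad_form (hessian_entry F x) h / 2\<bar> \<le> \<epsilon> * (norm h)\<^sup>2"
proof -
  define e where "e = 2 * \<epsilon> / real DIM('a) ^ 2"
  have e: "e > 0"
    using \<epsilon> by (simp add: e_def)
  have "\<forall>b\<in>Basis. \<forall>c\<in>Basis. eventually (\<lambda>z. dist (hessian_entry F z b c) (hessian_entry F x b c) < e) (nhds x)"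
  proof (intro ballI)
    fix b c :: 'a assume "b \<in> Basis" "c \<in> Basis"
    with F have "isCont (\<lambda>y. hessian_entry F y b c) x"
      using Ck_on_2_continuous_hessian_entry continuous_on_eq_continuous_at by blast
    then show "eventually (\<lambda>z. dist (hessian_entry F z b c) (hessian_entry F x b c) < e) (nhds x)"
      using e unfolding isCont_def eventually_nhds_conv_at by (auto intro: tendstoD)
  qed
  then have "eventually (\<lambda>z. \<forall>b\<in>Basis. \<forall>c\<in>Basis.
      dist (hessian_entry F z b c) (hessian_entry F x b c) < e) (nhds x)"
    by (simp add: eventually_ball_finite_distrib)
  then obtain \<rho>1 where \<rho>1: "\<rho>1 > 0" "\<And>z b c. dist z x < \<rho>1 \<Longrightarrow> b \<in> Basis \<Longrightarrow> c \<in> Basis \<Longrightarrow>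
      \<bar>hessian_entry F z b c - hessian_entry F x b c\<bar> \<le> e"
    unfolding eventually_nhds_metric dist_real_def by (metis less_imp_le)
  obtain \<rho>2 where \<rho>2: "\<rho>2 > 0" "ball x \<rho>2 \<subseteq> U"
    using F(2,3) open_contains_ball by blast
  have "\<bar>F (x + h) - F x - quad_form (hessian_entry F x) h / 2\<bar> \<le> \<epsilon> * (norm h)\<^sup>2"
    if h: "norm h < min \<rho>1 \<rho>2" for h
  proof -
    have near: "dist (x + t *\<^sub>R h) x < min \<rho>1 \<rho>2" if "0 \<le> t" "t \<le> 1" for t
      using h that mult_left_le_one_le[of "norm h" t] by (simp add: dist_norm)
    then obtain t where t: "0 < t" "t < 1"
        "F (x + h) - F x = quad_form (hessian_entry F (x + t *\<^sub>R h)) h / 2"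
      using taylor_at_critical_point[OF F(1,2) _ crit, of h] \<rho>2 by (force simp: dist_commute)
    have "\<bar>quad_form (hessian_entry F (x + t *\<^sub>R h)) h - quad_form (hessian_entry F x) h\<bar>
        \<le> real DIM('a) ^ 2 * e * (norm h)\<^sup>2"
      using near[of t] t by (intro quad_form_diff_le \<rho>1(2)) auto
    then show ?thesis
      using t(3) by (simp add: e_def)
  qed
  then show ?thesis
    using \<rho>1(1) \<rho>2(1) by (intro exI[of _ "min \<rho>1 \<rho>2"]) auto
qed

lemma rescaled_quadratic_error_le:
  fixes F :: "'a::euclidean_space \<Rightarrow> real"
  assumes err: "\<bar>F (x + c *\<^sub>R y) - F x - quad_form H (c *\<^sub>R y) / 2\<bar> \<le> e * (norm (c *\<^sub>R y))\<^sup>2"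
    and c: "c \<noteq> 0"
  shows "\<bar>(F (x + c *\<^sub>R y) - F x) / c\<^sup>2 - quad_form H y / 2\<bar> \<le> e * (norm y)\<^sup>2"
proof -
  have "(F (x + c *\<^sub>R y) - F x) / c\<^sup>2 - quad_form H y / 2
      = (F (x + c *\<^sub>R y) - F x - quad_form H (c *\<^sub>R y) / 2) / c\<^sup>2"
    using c by (simp add: quad_form_scaleR field_simps)
  also have "\<bar>\<dots>\<bar> \<le> e * (norm (c *\<^sub>R y))\<^sup>2 / c\<^sup>2"
    using err by (simp add: abs_divide divide_right_mono)
  also have "\<dots> = e * (norm y)\<^sup>2"
    using c by (simp add: power_mult_distrib)
  finally show ?thesis .
qed

lemma rescaled_limit_at_critical_point:
  fixes F :: "'a::euclidean_space \<Rightarrow> real"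
  assumes F: "Ck_on 2 U F" "open U" "x \<in> U"
    and crit: "frechet_derivative F (at x) = (\<lambda>_. 0)"
  shows "(\<lambda>n. real n * (F (x + inverse (sqrt (real n)) *\<^sub>R y) - F x))
           \<longlonglongrightarrow> quad_form (hessian_entry F x) y / 2"
proof (rule LIMSEQ_I)
  fix \<epsilon> :: real assume "\<epsilon> > 0"
  define \<epsilon>' where "\<epsilon>' = \<epsilon> / (2 * ((norm y)\<^sup>2 + 1))"
  have "\<epsilon>' > 0" and \<epsilon>'_le: "\<epsilon>' * (norm y)\<^sup>2 < \<epsilon>"
    using \<open>\<epsilon> > 0\<close> by (auto simp: \<epsilon>'_def field_simps add_pos_nonneg)
  then obtain \<rho> where \<rho>: "\<rho> > 0" "\<And>h. norm h < \<rho> \<Longrightarrow>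
      \<bar>F (x + h) - F x - quad_form (hessian_entry F x) h / 2\<bar> \<le> \<epsilon>' * (norm h)\<^sup>2"
    using taylor_little_o_at_critical_point[OF F crit] by blast
  have "(\<lambda>n. inverse (sqrt (real n)) * norm y) \<longlonglongrightarrow> 0 * norm y"
    by (intro tendsto_mult_right) real_asymp
  then have "eventually (\<lambda>n. inverse (sqrt (real n)) * norm y < \<rho>) sequentially"
    using \<rho>(1) by (auto dest: order_tendstoD)
  then have "eventually (\<lambda>n. norm (real n * (F (x + inverse (sqrt (real n)) *\<^sub>R y) - F x)
      - quad_form (hessian_entry F x) y / 2) < \<epsilon>) sequentially"
    using eventually_gt_at_top[of 0]
  proof eventually_elim
    case (elim n)
    have "\<bar>(F (x + inverse (sqrt (real n)) *\<^sub>R y) - F x) / (inverse (sqrt (real n)))\<^sup>2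
        - quad_form (hessian_entry F x) y / 2\<bar> \<le> \<epsilon>' * (norm y)\<^sup>2"
      using elim by (intro rescaled_quadratic_error_le \<rho>(2)) auto
    moreover have "(F (x + inverse (sqrt (real n)) *\<^sub>R y) - F x) / (inverse (sqrt (real n)))\<^sup>2
        = real n * (F (x + inverse (sqrt (real n)) *\<^sub>R y) - F x)"
      using elim(2) by (simp add: power_inverse divide_inverse_commute)
    ultimately show ?case
      using \<epsilon>'_le by simp
  qed
  then show "\<exists>N. \<forall>n\<ge>N. norm (real n * (F (x + inverse (sqrt (real n)) *\<^sub>R y) - F x)
      - quad_form (hessian_entry F x) y / 2) < \<epsilon>"
    by (simp add: eventually_sequentially)
qed

lemma quadratic_growth_at_nondegenerate_critical_point:
  fixes F :: "'a::euclidean_space \<Rightarrow> real"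
  assumes F: "Ck_on 2 U F" "open U" "x \<in> U"
    and crit: "frechet_derivative F (at x) = (\<lambda>_. 0)"
    and pd: "hessian_pos_def F x"
  shows "\<exists>\<rho>>0. \<exists>\<kappa>>0. \<forall>h. norm h < \<rho> \<longrightarrow> \<kappa> * (norm h)\<^sup>2 \<le> F (x + h) - F x"
proof -
  obtain \<kappa> where \<kappa>: "\<kappa> > 0" "\<And>h. \<kappa> * (norm h)\<^sup>2 \<le> quad_form (hessian_entry F x) h"
    using quad_form_coercive pd unfolding hessian_pos_def_iff_quad_form by blast
  obtain \<rho> where \<rho>: "\<rho> > 0" "\<And>h. norm h < \<rho> \<Longrightarrow>
      \<bar>F (x + h) - F x - quad_form (hessian_entry F x) h / 2\<bar> \<le> \<kappa> / 4 * (norm h)\<^sup>2"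
    using taylor_little_o_at_critical_point[OF F crit, of "\<kappa> / 4"] \<kappa>(1) by auto
  have "\<kappa> / 4 * (norm h)\<^sup>2 \<le> F (x + h) - F x" if "norm h < \<rho>" for h
    using \<rho>(2)[OF that] \<kappa>(2)[of h] by linarith
  moreover have "\<kappa> / 4 > 0"
    using \<kappa>(1) by simp
  ultimately show ?thesis
    using \<rho>(1) by blast
qed

section \<open>Integrals and elementary estimates\<close>

lemma integrable_gaussian_real:
  assumes a: "a > 0"
  shows "integrable lborel (\<lambda>t::real. exp (- a * t\<^sup>2))"
proof -
  define \<sigma> where "\<sigma> = sqrt (1 / (2 * a))"
  have \<sigma>: "\<sigma> > 0" "2 * \<sigma>\<^sup>2 = 1 / a"
    using a by (auto simp: \<sigma>_def)
  define C where "C = sqrt (2 * pi * \<sigma>\<^sup>2)"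
  have "C > 0"
    using \<sigma> by (simp add: C_def)
  have "normal_density 0 \<sigma> t = 1 / C * exp (- a * t\<^sup>2)" for t
    using \<sigma>(2) unfolding normal_density_def C_def by simp
  then have "(\<lambda>t::real. exp (- a * t\<^sup>2)) = (\<lambda>t. C * normal_density 0 \<sigma> t)"
    using \<open>C > 0\<close> by (simp add: fun_eq_iff)
  then show ?thesis
    using integrable_normal_density[OF \<sigma>(1), of 0] by simp
qed

lemma integrable_gaussian:
  assumes a: "a > 0"
  shows "integrable lborel (\<lambda>y::'a::euclidean_space. exp (- a * (norm y)\<^sup>2))"
proof -
  have "(\<lambda>y::'a. ennreal (norm (exp (- a * (norm y)\<^sup>2))))
      = (\<lambda>y. \<Prod>b\<in>Basis. ennreal (exp (- a * (y \<bullet> b)\<^sup>2)))"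
  proof
    fix y :: 'a
    have "(norm y)\<^sup>2 = (\<Sum>b\<in>Basis. (y \<bullet> b)\<^sup>2)"
      unfolding power2_norm_eq_inner euclidean_inner[of y y] by (simp add: power2_eq_square)
    then have "exp (- a * (norm y)\<^sup>2) = (\<Prod>b\<in>Basis. exp (- a * (y \<bullet> b)\<^sup>2))"
      by (simp add: sum_distrib_left exp_sum)
    then show "ennreal (norm (exp (- a * (norm y)\<^sup>2))) = (\<Prod>b\<in>Basis. ennreal (exp (- a * (y \<bullet> b)\<^sup>2)))"
      by (simp add: abs_of_nonneg prod_nonneg prod_ennreal)
  qed
  then have "(\<integral>\<^sup>+y. ennreal (norm (exp (- a * (norm y)\<^sup>2))) \<partial>(lborel::'a measure))
      = (\<integral>\<^sup>+y. (\<Prod>b\<in>Basis. ennreal (exp (- a * (y \<bullet> b)\<^sup>2))) \<partial>(lborel::'a measure))"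
    by (simp only:)
  also have "\<dots> = (\<Prod>b\<in>(Basis::'a set). \<integral>\<^sup>+t. ennreal (exp (- a * t\<^sup>2)) \<partial>lborel)"
    by (rule nn_integral_lborel_prod) simp_all
  also have "\<dots> = (\<integral>\<^sup>+t. ennreal (exp (- a * t\<^sup>2)) \<partial>lborel) ^ DIM('a)"
    by (simp only: prod_constant)
  also have "\<dots> < \<infinity>"
    using integrable_gaussian_real[OF a] by (simp add: integrable_iff_bounded power_less_top_ennreal)
  finally show ?thesis
    by (simp add: integrable_iff_bounded)
qed

lemma exp_times_one_plus_le:
  fixes a s :: real
  assumes a: "a > 0" and s: "s \<ge> 0"
  shows "exp (- a * s) * (1 + s) \<le> (1 + 2 / a) * exp (- (a / 2) * s)"
proof -
  define E where "E = exp (- (a / 2) * s)"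
  have E: "0 \<le> E" "E \<le> 1" "exp (- a * s) = E * E"
    using a s by (auto simp: E_def simp flip: exp_add)
  have "s \<le> 2 / a * exp (a / 2 * s)"
    using exp_ge_add_one_self[of "a / 2 * s"] a by (simp add: field_simps)
  then have "s * E \<le> 2 / a * exp (a / 2 * s) * E"
    using E(1) by (rule mult_right_mono)
  also have "\<dots> = 2 / a"
    by (simp add: E_def flip: exp_add)
  finally have "s * E * E \<le> 2 / a * E"
    using E(1) by (rule mult_right_mono)
  moreover have "E * E \<le> E"
    using E(1,2) by (simp add: mult_left_le_one_le)
  ultimately have "exp (- a * s) * (1 + s) \<le> E + 2 / a * E"
    unfolding E(3) by (simp add: algebra_simps)
  then show ?thesis
    by (simp add: E_def algebra_simps)
qed

lemma power_le_one_plus_square: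
  fixes u :: real
  assumes "0 \<le> u" "j \<le> 2"
  shows "u ^ j \<le> 1 + u\<^sup>2"
proof -
  have "u \<le> 1 + u\<^sup>2"
    using sum_squares_bound[of u 1] assms(1) by (simp add: power2_eq_square)
  then show ?thesis
    using assms by (auto simp: le_Suc_eq numeral_2_eq_2 power2_eq_square)
qed

lemma integrable_gaussian_times_one_plus_norm_sq:
  assumes a: "a > 0"
  shows "integrable lborel (\<lambda>y::'a::euclidean_space. exp (- a * (norm y)\<^sup>2) * (1 + (norm y)\<^sup>2))"
proof (rule Bochner_Integration.integrable_bound)
  show "integrable lborel (\<lambda>y::'a. (1 + 2 / a) * exp (- (a / 2) * (norm y)\<^sup>2))"
    using integrable_gaussian[of "a / 2"] a by (intro integrable_mult_right) simp
  show "AE y in lborel. norm (exp (- a * (norm y)\<^sup>2) * (1 + (norm y)\<^sup>2))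
      \<le> norm ((1 + 2 / a) * exp (- (a / 2) * (norm y)\<^sup>2))"
    using exp_times_one_plus_le[OF a] a by (intro AE_I2) (simp add: abs_mult)
qed measurable

lemma lborel_integral_affine:
  fixes g :: "'a::euclidean_space \<Rightarrow> real"
  assumes c: "c \<noteq> 0" and g[measurable]: "g \<in> borel_measurable borel"
  shows "(\<integral>x. g x \<partial>lborel) = \<bar>c\<bar> ^ DIM('a) * (\<integral>y. g (t + c *\<^sub>R y) \<partial>lborel)"
proof -
  have "(\<integral>x. g x \<partial>lborel)
      = (\<integral>x. g x \<partial>density (distr lborel borel (\<lambda>y. t + c *\<^sub>R y)) (\<lambda>_. ennreal (\<bar>c\<bar> ^ DIM('a))))"
    by (simp flip: lborel_affine[OF c])
  also have "\<dots> = (\<integral>x. \<bar>c\<bar> ^ DIM('a) *\<^sub>R g x \<partial>distr lborel borel (\<lambda>y. t + c *\<^sub>R y))"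
    by (rule integral_density) simp_all
  also have "\<dots> = \<bar>c\<bar> ^ DIM('a) * (\<integral>y. g (t + c *\<^sub>R y) \<partial>lborel)"
    by (subst integral_distr) simp_all
  finally show ?thesis .
qed

lemma AE_lborel_imp_ex_in_ball:
  fixes v :: "'a::euclidean_space"
  assumes ae: "AE y in lborel. P y" and e: "e > 0"
  shows "\<exists>y\<in>ball v e. P y"
proof (rule ccontr)
  assume "\<not> (\<exists>y\<in>ball v e. P y)"
  then have "ball v e \<subseteq> {y \<in> space lborel. \<not> P y}"
    by auto
  moreover obtain N where "{y \<in> space lborel. \<not> P y} \<subseteq> N" "emeasure lborel N = 0" "N \<in> sets lborel"
    using ae by (rule AE_E)
  ultimately have "emeasure lborel (ball v e) = 0"
    using emeasure_mono[of "ball v e" N lborel] by (simp add: le_zero_eq)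
  then show False
    using content_ball_pos[OF e, of v] by (simp add: measure_def)
qed

lemma lborel_integral_pos_if_pos_on_ball:
  fixes g :: "'a::euclidean_space \<Rightarrow> real"
  assumes int: "integrable lborel g" and nn: "\<And>y. g y \<ge> 0"
    and e: "e > 0" and pos: "\<And>y. y \<in> ball v e \<Longrightarrow> g y > 0"
  shows "(\<integral>y. g y \<partial>lborel) > 0"
proof -
  have "(\<integral>y. g y \<partial>lborel) \<noteq> 0"
  proof
    assume "(\<integral>y. g y \<partial>lborel) = 0"
    then have "AE y in lborel. g y = 0"
      using integral_nonneg_eq_0_iff_AE[OF int] nn by simp
    with pos show False
      using AE_lborel_imp_ex_in_ball[OF _ e, of "\<lambda>y. g y = 0" v] by force
  qed
  moreover have "(\<integral>y. g y \<partial>lborel) \<ge> 0"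
    using nn by (simp add: integral_nonneg)
  ultimately show ?thesis
    by simp
qed

lemma sets_prior [measurable_cong]: "sets (prior pi0) = sets borel"
  by (simp add: prior_def)

lemma integral_prior:
  assumes "\<And>x. pi0 x \<ge> 0" "pi0 \<in> borel_measurable borel" "g \<in> borel_measurable borel"
  shows "(\<integral>x. g x \<partial>prior pi0) = (\<integral>x. pi0 x * g x \<partial>lborel)"
  unfolding prior_def using assms by (subst integral_density) auto

lemma sqrt_power_eq_powr: "x > 0 \<Longrightarrow> sqrt x ^ k = x powr (real k / 2)"
  by (simp add: powr_half_sqrt[symmetric] powr_power)

lemma asymp_equiv_const_times:
  fixes R g h :: "'b \<Rightarrow> real"
  assumes "(R \<longlongrightarrow> c) F" "c \<noteq> 0" "eventually (\<lambda>n. g n = R n * h n) F"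
  shows "g \<sim>[F] (\<lambda>n. c * h n)"
proof -
  have "(\<lambda>n. R n * h n) \<sim>[F] (\<lambda>n. c * h n)"
    using assms(1,2) by (intro asymp_equiv_mult tendsto_imp_asymp_equiv_const asymp_equiv_refl)
  then show ?thesis
    using asymp_equiv_cong[OF assms(3), of "\<lambda>n. c * h n" "\<lambda>n. c * h n"] by simp
qed

section \<open>The Laplace setting\<close>

locale laplace_posterior =
  fixes pi0 \<Phi> f :: "'a::euclidean_space \<Rightarrow> real" and xs :: 'a and U :: "'a set"
  assumes pi0_nonneg: "\<And>x. pi0 x \<ge> 0"
    and prob: "prob_space (prior pi0)"
    and pi0_cont: "continuous_on UNIV pi0"
    and Phi_meas [measurable]: "\<Phi> \<in> borel_measurable borel"
    and xs_int: "xs \<in> interior {x. pi0 x > 0}"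
    and sep: "\<And>r. r > 0 \<Longrightarrow> \<exists>\<delta>>0. \<forall>x\<in>{x. pi0 x > 0}. dist x xs > r \<longrightarrow> \<Phi> x - \<Phi> xs \<ge> \<delta>"
    and U: "open U" "xs \<in> U"
    and Phi_C2: "Ck_on 2 U \<Phi>"
    and hess: "hessian_pos_def \<Phi> xs"
    and f_C1: "Ck_on 1 UNIV f"
    and grad: "frechet_derivative f (at xs) \<noteq> (\<lambda>_. 0)"
    and fin: "\<And>n g. n \<ge> 1 \<Longrightarrow> g \<in> {pi0, (\<lambda>x. f x * pi0 x), (\<lambda>x. (f x)\<^sup>2 * pi0 x)} \<Longrightarrow>
               set_integrable lborel {x. pi0 x > 0} (\<lambda>x. g x * exp (- real n * \<Phi> x))"
begin

definition gap :: "'a \<Rightarrow> real" where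
  "gap x = \<Phi> x - \<Phi> xs"

abbreviation Q :: "'a \<Rightarrow> real" where
  "Q \<equiv> quad_form (hessian_entry \<Phi> xs)"

abbreviation Df :: "'a \<Rightarrow> real" where
  "Df \<equiv> frechet_derivative f (at xs)"

lemma pi0_xs_pos: "pi0 xs > 0"
  using interior_subset xs_int by blast

lemma pi0_eq_0_iff_not_pos: "\<not> pi0 x > 0 \<longleftrightarrow> pi0 x = 0"
  using pi0_nonneg[of x] by auto

lemma f_differentiable: "f differentiable at x"
  using Ck_on_Suc_imp_differentiable[of 0 UNIV f] f_C1 by simp

lemma Df_bounded_linear: "bounded_linear Df"
  using f_differentiable frechet_derivative_works has_derivative_bounded_linear by blast

lemma pi0_measurable [measurable]: "pi0 \<in> borel_measurable borel"
  by (rule borel_measurable_continuous_onI[OF pi0_cont])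

lemma f_measurable [measurable]: "f \<in> borel_measurable borel"
  using Ck_on_imp_continuous_on[OF f_C1] by (rule borel_measurable_continuous_onI)

lemma gap_measurable [measurable]: "gap \<in> borel_measurable borel"
  unfolding gap_def[abs_def] by measurable

lemma Df_measurable [measurable]: "Df \<in> borel_measurable borel"
  using linear_continuous_on[OF Df_bounded_linear] by (rule borel_measurable_continuous_onI)

lemma gap_pos: "pi0 x > 0 \<Longrightarrow> x \<noteq> xs \<Longrightarrow> gap x > 0"
  using sep[of "dist x xs / 2"] by (force simp: gap_def)

lemma gap_nonneg: "pi0 x > 0 \<Longrightarrow> gap x \<ge> 0"
  using gap_pos[of x] by (cases "x = xs") (auto simp: gap_def)

lemma Phi_critical: "frechet_derivative \<Phi> (at xs) = (\<lambda>_. 0)"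
proof (rule has_derivative_local_min)
  have "Ck_on (Suc 1) U \<Phi>"
    using Phi_C2 by (simp only: Suc_1)
  then have "\<Phi> differentiable at xs"
    using Ck_on_Suc_imp_differentiable U by blast
  then show "(\<Phi> has_derivative frechet_derivative \<Phi> (at xs)) (at xs)"
    using frechet_derivative_works by blast
  obtain e where "e > 0" "ball xs e \<subseteq> {x. pi0 x > 0}"
    using xs_int by (meson mem_interior)
  moreover have "eventually (\<lambda>y. y \<in> ball xs e) (at xs)"
    using \<open>e > 0\<close> by (intro eventually_at_in_open') auto
  ultimately show "eventually (\<lambda>y. \<Phi> xs \<le> \<Phi> y) (at xs)"
    by (elim eventually_mono) (use gap_nonneg in \<open>force simp: gap_def\<close>)
qed

lemma gap_quadratic_lower_bound:
  obtains r \<kappa> where "r > 0" "\<kappa> > 0" "\<And>x. x \<in> cball xs r \<Longrightarrow> \<kappa> * (norm (x - xs))\<^sup>2 \<le> gap x"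
proof -
  obtain \<rho> \<kappa> where \<rho>: "\<rho> > 0" "\<kappa> > 0" "\<And>h. norm h < \<rho> \<Longrightarrow> \<kappa> * (norm h)\<^sup>2 \<le> \<Phi> (xs + h) - \<Phi> xs"
    using quadratic_growth_at_nondegenerate_critical_point[OF Phi_C2 U Phi_critical hess] by blast
  have "\<kappa> * (norm (x - xs))\<^sup>2 \<le> gap x" if "x \<in> cball xs (\<rho> / 2)" for x
    using \<rho>(1) \<rho>(3)[of "x - xs"] that by (simp add: gap_def dist_norm norm_minus_commute)
  then show ?thesis
    using that[of "\<rho> / 2" \<kappa>] \<rho>(1,2) by simp
qed

definition zoom :: "nat \<Rightarrow> 'a \<Rightarrow> 'a" where
  "zoom n y = xs + inverse (sqrt (real n)) *\<^sub>R y"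

lemma zoom_measurable [measurable]: "zoom n \<in> borel_measurable borel"
  unfolding zoom_def[abs_def] by measurable

lemma zoom_tendsto: "(\<lambda>n. zoom n y) \<longlonglongrightarrow> xs"
proof -
  have "(\<lambda>n. inverse (sqrt (real n))) \<longlonglongrightarrow> 0"
    by real_asymp
  then have "(\<lambda>n. xs + inverse (sqrt (real n)) *\<^sub>R y) \<longlonglongrightarrow> xs + 0 *\<^sub>R y"
    by (intro tendsto_intros)
  then show ?thesis
    by (simp add: zoom_def)
qed

lemma gap_zoom_tendsto: "(\<lambda>n. real n * gap (zoom n y)) \<longlonglongrightarrow> Q y / 2"
  using rescaled_limit_at_critical_point[OF Phi_C2 U Phi_critical] by (simp add: gap_def zoom_def)

lemma f_zoom_tendsto: "(\<lambda>n. sqrt (real n) * (f (zoom n y) - f xs)) \<longlonglongrightarrow> Df y"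
  using rescaled_difference_quotient_limit[OF f_differentiable] by (simp add: zoom_def)

definition moment_integrand :: "nat \<Rightarrow> nat \<Rightarrow> 'a \<Rightarrow> real" where
  "moment_integrand k j x = pi0 x * exp (- real k * gap x) * (f x - f xs) ^ j"

definition moment :: "nat \<Rightarrow> nat \<Rightarrow> real" where
  "moment k j = (\<integral>x. moment_integrand k j x \<partial>lborel)"

lemma moment_integrand_measurable [measurable]: "moment_integrand k j \<in> borel_measurable borel"
  unfolding moment_integrand_def[abs_def] by measurable

lemma integrable_tilted_power:
  assumes "k \<ge> 1" "i \<le> 2"
  shows "integrable lborel (\<lambda>x. pi0 x * exp (- real k * \<Phi> x) * f x ^ i)"
proof -
  have "set_integrable lborel {x. pi0 x > 0} (\<lambda>x. f x ^ i * pi0 x * exp (- real k * \<Phi> x))"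
    using assms by (intro fin) (auto simp: le_Suc_eq numeral_2_eq_2)
  then have "integrable lborel
      (\<lambda>x. indicator {x. pi0 x > 0} x *\<^sub>R (f x ^ i * pi0 x * exp (- real k * \<Phi> x)))"
    by (simp only: set_integrable_def)
  also have "(\<lambda>x. indicator {x. pi0 x > 0} x *\<^sub>R (f x ^ i * pi0 x * exp (- real k * \<Phi> x)))
      = (\<lambda>x. pi0 x * exp (- real k * \<Phi> x) * f x ^ i)"
    by (auto simp: fun_eq_iff indicator_def pi0_eq_0_iff_not_pos)
  finally show ?thesis .
qed

lemma integrable_moment_integrand:
  assumes "k \<ge> 1" "j \<le> 2"
  shows "integrable lborel (moment_integrand k j)"
proof -
  have eq: "moment_integrand k j = (\<lambda>x. \<Sum>i\<le>j. (exp (real k * \<Phi> xs) * of_nat (j choose i) * (- f xs) ^ (j - i))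
      * (pi0 x * exp (- real k * \<Phi> x) * f x ^ i))"
  proof
    fix x
    have "exp (- real k * gap x) = exp (real k * \<Phi> xs) * exp (- real k * \<Phi> x)"
      by (simp add: gap_def algebra_simps flip: exp_add)
    moreover have "(f x - f xs) ^ j = (\<Sum>i\<le>j. of_nat (j choose i) * f x ^ i * (- f xs) ^ (j - i))"
      using binomial_ring[of "f x" "- f xs" j] by simp
    ultimately show "moment_integrand k j x = (\<Sum>i\<le>j. (exp (real k * \<Phi> xs) * of_nat (j choose i)
        * (- f xs) ^ (j - i)) * (pi0 x * exp (- real k * \<Phi> x) * f x ^ i))"
      by (simp add: moment_integrand_def sum_distrib_left mult_ac)
  qed
  show ?thesis
    unfolding eq
    by (intro Bochner_Integration.integrable_sum integrable_mult_right integrable_tilted_power) (use assms in auto)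
qed

lemma integral_tilted_f:
  assumes "k \<ge> 1"
  shows "(\<integral>x. pi0 x * exp (- real k * gap x) * f x \<partial>lborel) = moment k 1 + f xs * moment k 0"
proof -
  have "(\<integral>x. pi0 x * exp (- real k * gap x) * f x \<partial>lborel)
      = (\<integral>x. moment_integrand k 1 x + f xs * moment_integrand k 0 x \<partial>lborel)"
    by (rule Bochner_Integration.integral_cong) (simp_all add: moment_integrand_def algebra_simps)
  then show ?thesis
    using integrable_moment_integrand assms by (simp add: moment_def)
qed

lemma integral_tilted_square:
  assumes "k \<ge> 1"
  shows "(\<integral>x. pi0 x * exp (- real k * gap x) * (f x - c)\<^sup>2 \<partial>lborel)
       = moment k 2 + 2 * (f xs - c) * moment k 1 + (f xs - c)\<^sup>2 * moment k 0"
proof -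
  have "(\<integral>x. pi0 x * exp (- real k * gap x) * (f x - c)\<^sup>2 \<partial>lborel)
      = (\<integral>x. moment_integrand k 2 x + (2 * (f xs - c) * moment_integrand k 1 x
              + (f xs - c)\<^sup>2 * moment_integrand k 0 x) \<partial>lborel)"
    by (rule Bochner_Integration.integral_cong) (simp_all add: moment_integrand_def power2_eq_square algebra_simps)
  then show ?thesis
    using integrable_moment_integrand assms by (simp add: moment_def)
qed

end

section \<open>Laplace asymptotics of the tilted moments\<close>

context laplace_posterior begin

definition gauss_integrand :: "nat \<Rightarrow> nat \<Rightarrow> 'a \<Rightarrow> real" where
  "gauss_integrand m j y = pi0 xs * exp (- real m * (Q y / 2)) * Df y ^ j"

definition gauss_moment :: "nat \<Rightarrow> nat \<Rightarrow> real" where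
  "gauss_moment m j = (\<integral>y. gauss_integrand m j y \<partial>lborel)"

lemma gauss_integrand_measurable [measurable]: "gauss_integrand m j \<in> borel_measurable borel"
  unfolding gauss_integrand_def[abs_def] by measurable

definition rescaled_integrand :: "real \<Rightarrow> nat \<Rightarrow> nat \<Rightarrow> nat \<Rightarrow> 'a \<Rightarrow> real" where
  "rescaled_integrand r m j n y =
     indicator (ball xs r) (zoom n y) * sqrt (real n) ^ j * moment_integrand (m * n) j (zoom n y)"

lemma rescaled_integrand_measurable [measurable]: "rescaled_integrand r m j n \<in> borel_measurable borel"
proof -
  have [measurable]: "ball xs r \<in> sets borel"
    by simp
  show ?thesis
    unfolding rescaled_integrand_def[abs_def] by measurable
qed

lemma rescaled_integrand_eq:
  "rescaled_integrand r m j n y = indicator (ball xs r) (zoom n y) * pi0 (zoom n y)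
     * exp (- real m * (real n * gap (zoom n y))) * (sqrt (real n) * (f (zoom n y) - f xs)) ^ j"
  by (simp add: rescaled_integrand_def moment_integrand_def power_mult_distrib mult_ac)

lemma integral_ball_eq_integral_rescaled:
  assumes n: "n \<ge> 1"
  shows "real n powr ((real DIM('a) + real j) / 2)
           * (\<integral>x. indicator (ball xs r) x * moment_integrand (m * n) j x \<partial>lborel)
       = (\<integral>y. rescaled_integrand r m j n y \<partial>lborel)"
proof -
  define c where "c = inverse (sqrt (real n))"
  have "c \<noteq> 0"
    using n by (simp add: c_def)
  have "real n powr ((real DIM('a) + real j) / 2) * \<bar>c\<bar> ^ DIM('a)
      = sqrt (real n) ^ (DIM('a) + j) * inverse (sqrt (real n)) ^ DIM('a)"
    using sqrt_power_eq_powr[of "real n" "DIM('a) + j"] n by (simp add: c_def power_inverse)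
  also have "\<dots> = sqrt (real n) ^ j"
    using n by (simp add: power_add field_simps)
  finally have scale: "real n powr ((real DIM('a) + real j) / 2) * \<bar>c\<bar> ^ DIM('a) = sqrt (real n) ^ j" .
  have [measurable]: "ball xs r \<in> sets borel"
    by simp
  have "(\<integral>x. indicator (ball xs r) x * moment_integrand (m * n) j x \<partial>lborel)
      = \<bar>c\<bar> ^ DIM('a) * (\<integral>y. indicator (ball xs r) (xs + c *\<^sub>R y)
          * moment_integrand (m * n) j (xs + c *\<^sub>R y) \<partial>lborel)"
    by (rule lborel_integral_affine[OF \<open>c \<noteq> 0\<close>]) measurable
  then have "real n powr ((real DIM('a) + real j) / 2)
        * (\<integral>x. indicator (ball xs r) x * moment_integrand (m * n) j x \<partial>lborel)
      = real n powr ((real DIM('a) + real j) / 2) * \<bar>c\<bar> ^ DIM('a)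
        * (\<integral>y. indicator (ball xs r) (zoom n y) * moment_integrand (m * n) j (zoom n y) \<partial>lborel)"
    by (simp add: zoom_def c_def)
  also have "\<dots> = (\<integral>y. sqrt (real n) ^ j
      * (indicator (ball xs r) (zoom n y) * moment_integrand (m * n) j (zoom n y)) \<partial>lborel)"
    by (simp only: scale integral_mult_right_zero)
  also have "\<dots> = (\<integral>y. rescaled_integrand r m j n y \<partial>lborel)"
    by (simp add: rescaled_integrand_def mult_ac)
  finally show ?thesis .
qed

lemma rescaled_integrand_tendsto:
  assumes "r > 0"
  shows "(\<lambda>n. rescaled_integrand r m j n y) \<longlonglongrightarrow> gauss_integrand m j y"
proof -
  have "eventually (\<lambda>n. zoom n y \<in> ball xs r) sequentially"
    using assms by (intro topological_tendstoD[OF zoom_tendsto]) auto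
  then have "(\<lambda>n. indicator (ball xs r) (zoom n y) :: real) \<longlonglongrightarrow> 1"
    by (intro tendsto_eventually) (auto elim: eventually_mono)
  moreover have "(\<lambda>n. pi0 (zoom n y)) \<longlonglongrightarrow> pi0 xs"
    using pi0_cont by (intro isCont_tendsto_compose[OF _ zoom_tendsto]) (simp add: continuous_on_eq_continuous_at)
  ultimately have "(\<lambda>n. indicator (ball xs r) (zoom n y) * pi0 (zoom n y)
      * exp (- real m * (real n * gap (zoom n y))) * (sqrt (real n) * (f (zoom n y) - f xs)) ^ j)
      \<longlonglongrightarrow> 1 * pi0 xs * exp (- real m * (Q y / 2)) * Df y ^ j"
    by (intro tendsto_intros gap_zoom_tendsto f_zoom_tendsto)
  then show ?thesis
    by (simp add: rescaled_integrand_eq gauss_integrand_def)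
qed

lemma norm_zoom: "n \<ge> 1 \<Longrightarrow> sqrt (real n) * norm (zoom n y - xs) = norm y"
  by (simp add: zoom_def)

lemma exp_gap_zoom_le:
  assumes growth: "\<kappa> * (norm (zoom n y - xs))\<^sup>2 \<le> gap (zoom n y)"
    and \<kappa>: "\<kappa> > 0" and n: "n \<ge> 1" and m: "m \<ge> 1"
  shows "exp (- real m * (real n * gap (zoom n y))) \<le> exp (- \<kappa> * (norm y)\<^sup>2)"
proof -
  have "\<kappa> * (norm y)\<^sup>2 = real n * (\<kappa> * (norm (zoom n y - xs))\<^sup>2)"
    using n by (simp flip: norm_zoom[OF n, of y] add: power_mult_distrib)
  also have "\<dots> \<le> real n * gap (zoom n y)"
    using growth by (intro mult_left_mono) auto
  finally have "\<kappa> * (norm y)\<^sup>2 \<le> real n * gap (zoom n y)" .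
  moreover have "0 \<le> \<kappa> * (norm y)\<^sup>2"
    using \<kappa> by simp
  ultimately have "\<kappa> * (norm y)\<^sup>2 \<le> real m * (real n * gap (zoom n y))"
    using mult_right_mono[of 1 "real m" "real n * gap (zoom n y)"] m by simp
  then show ?thesis
    by simp
qed

lemma f_zoom_power_le:
  assumes lip: "\<bar>f (zoom n y) - f xs\<bar> \<le> L * norm (zoom n y - xs)"
    and n: "n \<ge> 1" and j: "j \<le> 2"
  shows "\<bar>sqrt (real n) * (f (zoom n y) - f xs)\<bar> ^ j \<le> (1 + L\<^sup>2) * (1 + (norm y)\<^sup>2)"
proof -
  have "\<bar>sqrt (real n) * (f (zoom n y) - f xs)\<bar> = sqrt (real n) * \<bar>f (zoom n y) - f xs\<bar>"
    by (simp add: abs_mult)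
  also have "\<dots> \<le> sqrt (real n) * (L * norm (zoom n y - xs))"
    using lip by (intro mult_left_mono) auto
  also have "\<dots> = L * norm y"
    by (simp flip: norm_zoom[OF n, of y] add: mult_ac)
  finally have "\<bar>sqrt (real n) * (f (zoom n y) - f xs)\<bar>\<^sup>2 \<le> (L * norm y)\<^sup>2"
    by (intro power_mono) auto
  then have "\<bar>sqrt (real n) * (f (zoom n y) - f xs)\<bar> ^ j \<le> 1 + (L * norm y)\<^sup>2"
    using power_le_one_plus_square[OF abs_ge_zero[of "sqrt (real n) * (f (zoom n y) - f xs)"] j]
    by linarith
  also have "\<dots> \<le> (1 + L\<^sup>2) * (1 + (norm y)\<^sup>2)"
    by (simp add: algebra_simps power_mult_distrib)
  finally show ?thesis .
qed

lemma rescaled_integrand_bound: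
  assumes growth: "\<And>x. x \<in> cball xs r \<Longrightarrow> \<kappa> * (norm (x - xs))\<^sup>2 \<le> gap x"
    and \<kappa>: "\<kappa> > 0" and m: "m \<ge> 1" and j: "j \<le> 2"
  obtains C where "\<And>n y. n \<ge> 1 \<Longrightarrow>
    \<bar>rescaled_integrand r m j n y\<bar> \<le> C * (exp (- \<kappa> * (norm y)\<^sup>2) * (1 + (norm y)\<^sup>2))"
proof -
  obtain L where L: "\<And>z. z \<in> cball xs r \<Longrightarrow> \<bar>f z - f xs\<bar> \<le> L * norm (z - xs)"
    using C1_lipschitz_on_cball[OF f_C1] by blast
  obtain P where P: "\<And>z. z \<in> cball xs r \<Longrightarrow> pi0 z \<le> P"
    using continuous_on_cball_bounded_above[OF continuous_on_subset[OF pi0_cont subset_UNIV]] by blast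
  have "\<bar>rescaled_integrand r m j n y\<bar>
      \<le> max P 0 * (1 + L\<^sup>2) * (exp (- \<kappa> * (norm y)\<^sup>2) * (1 + (norm y)\<^sup>2))" if n: "n \<ge> 1" for n y
  proof (cases "zoom n y \<in> ball xs r")
    case False
    then show ?thesis
      by (simp add: rescaled_integrand_def)
  next
    case True
    then have z: "zoom n y \<in> cball xs r"
      by auto
    have "0 \<le> pi0 (zoom n y)" "pi0 (zoom n y) \<le> max P 0"
      using pi0_nonneg P[OF z] by auto
    with exp_gap_zoom_le[OF growth[OF z] \<kappa> n m] f_zoom_power_le[OF L[OF z] n j]
    have "pi0 (zoom n y) * exp (- real m * (real n * gap (zoom n y)))
          * \<bar>sqrt (real n) * (f (zoom n y) - f xs)\<bar> ^ j
        \<le> max P 0 * exp (- \<kappa> * (norm y)\<^sup>2) * ((1 + L\<^sup>2) * (1 + (norm y)\<^sup>2))"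
      by (intro mult_mono mult_nonneg_nonneg) auto
    then show ?thesis
      using True pi0_nonneg[of "zoom n y"]
      by (simp add: rescaled_integrand_eq abs_mult power_abs mult_ac)
  qed
  then show ?thesis
    using that by blast
qed

lemma rescaled_integral_tendsto:
  assumes m: "m \<ge> 1" and j: "j \<le> 2"
  obtains r where "r > 0" "integrable lborel (gauss_integrand m j)"
    "(\<lambda>n. \<integral>y. rescaled_integrand r m j n y \<partial>lborel) \<longlonglongrightarrow> gauss_moment m j"
proof -
  obtain r \<kappa> where r: "r > 0" "\<kappa> > 0"
    and growth: "\<And>x. x \<in> cball xs r \<Longrightarrow> \<kappa> * (norm (x - xs))\<^sup>2 \<le> gap x"
    by (metis gap_quadratic_lower_bound)
  obtain C where C: "\<And>n y. n \<ge> 1 \<Longrightarrow>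
      \<bar>rescaled_integrand r m j n y\<bar> \<le> C * (exp (- \<kappa> * (norm y)\<^sup>2) * (1 + (norm y)\<^sup>2))"
    by (metis rescaled_integrand_bound[OF growth r(2) m j])
  define w where "w y = C * (exp (- \<kappa> * (norm y)\<^sup>2) * (1 + (norm y)\<^sup>2))" for y :: 'a
  have w: "integrable lborel w"
    unfolding w_def by (intro integrable_mult_right integrable_gaussian_times_one_plus_norm_sq r(2))
  have lim: "AE y in lborel. (\<lambda>n. rescaled_integrand r m j (Suc n) y) \<longlonglongrightarrow> gauss_integrand m j y"
    by (intro AE_I2 LIMSEQ_Suc[OF rescaled_integrand_tendsto[OF r(1)]])
  have dom: "AE y in lborel. norm (rescaled_integrand r m j (Suc n) y) \<le> w y" for n
    using C by (intro AE_I2) (simp add: w_def)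
  have "integrable lborel (gauss_integrand m j)"
    by (rule integrable_dominated_convergence[OF _ _ w lim dom]) measurable
  moreover have "(\<lambda>n. \<integral>y. rescaled_integrand r m j (Suc n) y \<partial>lborel) \<longlonglongrightarrow> gauss_moment m j"
    unfolding gauss_moment_def by (rule integral_dominated_convergence[OF _ _ w lim dom]) measurable
  then have "(\<lambda>n. \<integral>y. rescaled_integrand r m j n y \<partial>lborel) \<longlonglongrightarrow> gauss_moment m j"
    by (rule LIMSEQ_imp_Suc)
  ultimately show ?thesis
    by (rule that[OF r(1)])
qed

lemma integrable_indicator_moment_integrand:
  assumes "k \<ge> 1" "j \<le> 2" "A \<in> sets borel"
  shows "integrable lborel (\<lambda>x. indicator A x * moment_integrand k j x)"
  using integrable_mult_indicator[of A lborel "moment_integrand k j"] integrable_moment_integrand assms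
  by simp

lemma moment_integrand_exp_decay:
  assumes \<delta>: "0 < \<delta>" "\<delta> \<le> gap x" and n: "n \<ge> 1" and m: "m \<ge> 1"
  shows "\<bar>moment_integrand (m * n) j x\<bar> \<le> exp (- (real n - 1) * \<delta>) * \<bar>moment_integrand 1 j x\<bar>"
proof -
  have "(real n - 1) * \<delta> + gap x \<le> real n * gap x"
    using mult_left_mono[OF \<delta>(2), of "real n - 1"] n by (simp add: algebra_simps)
  also have "\<dots> \<le> real (m * n) * gap x"
  proof (rule mult_right_mono)
    show "real n \<le> real (m * n)"
      using m by (metis mult_1 mult_le_mono1 of_nat_le_iff)
  qed (use \<delta> in auto)
  finally have "exp (- real (m * n) * gap x) \<le> exp (- (real n - 1) * \<delta> + - real 1 * gap x)"
    by (simp add: algebra_simps)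
  then have "pi0 x * \<bar>f x - f xs\<bar> ^ j * exp (- real (m * n) * gap x)
      \<le> pi0 x * \<bar>f x - f xs\<bar> ^ j * (exp (- (real n - 1) * \<delta>) * exp (- real 1 * gap x))"
    unfolding exp_add by (intro mult_left_mono) (simp_all add: pi0_nonneg)
  then show ?thesis
    using pi0_nonneg[of x] by (simp add: moment_integrand_def abs_mult power_abs mult_ac)
qed

definition tail_integral :: "real \<Rightarrow> nat \<Rightarrow> nat \<Rightarrow> real" where
  "tail_integral r k j = (\<integral>x. indicator (- ball xs r) x * moment_integrand k j x \<partial>lborel)"

lemma tail_integral_bound:
  assumes r: "r > 0" and m: "m \<ge> 1" and j: "j \<le> 2"
  obtains \<delta> where "\<delta> > 0" "\<And>n. n \<ge> 1 \<Longrightarrow>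
    \<bar>tail_integral r (m * n) j\<bar> \<le> exp (- (real n - 1) * \<delta>) * (\<integral>x. \<bar>moment_integrand 1 j x\<bar> \<partial>lborel)"
proof -
  obtain \<delta> where \<delta>: "\<delta> > 0" "\<And>x. pi0 x > 0 \<Longrightarrow> dist x xs > r / 2 \<Longrightarrow> \<delta> \<le> gap x"
    using sep[of "r / 2"] r by (auto simp: gap_def)
  have pointwise: "\<bar>indicator (- ball xs r) x * moment_integrand (m * n) j x\<bar>
      \<le> exp (- (real n - 1) * \<delta>) * \<bar>moment_integrand 1 j x\<bar>" if n: "n \<ge> 1" for n x
  proof (cases "x \<notin> ball xs r \<and> pi0 x > 0")
    case False
    then show ?thesis
      by (auto simp: moment_integrand_def pi0_eq_0_iff_not_pos)
  next
    case True
    then have "\<delta> \<le> gap x"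
      using r by (intro \<delta>(2)) (auto simp: dist_commute)
    with True show ?thesis
      using moment_integrand_exp_decay[OF \<delta>(1) _ n m] by simp
  qed
  have "\<bar>tail_integral r (m * n) j\<bar> \<le> exp (- (real n - 1) * \<delta>) * (\<integral>x. \<bar>moment_integrand 1 j x\<bar> \<partial>lborel)"
    if n: "n \<ge> 1" for n
  proof -
    have "\<bar>tail_integral r (m * n) j\<bar> \<le> (\<integral>x. exp (- (real n - 1) * \<delta>) * \<bar>moment_integrand 1 j x\<bar> \<partial>lborel)"
      unfolding tail_integral_def
      using pointwise[OF n] integrable_moment_integrand[of 1 j] j m n
      by (intro integral_abs_bound_integral integrable_indicator_moment_integrand) (auto simp: Suc_le_eq)
    then show ?thesis
      by simp
  qed
  then show ?thesis
    using that \<delta>(1) by blast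
qed

lemma tail_integral_negligible:
  assumes "r > 0" "m \<ge> 1" "j \<le> 2"
  shows "(\<lambda>n. real n powr p * tail_integral r (m * n) j) \<longlonglongrightarrow> 0"
proof -
  define I where "I = (\<integral>x. \<bar>moment_integrand 1 j x\<bar> \<partial>lborel)"
  obtain \<delta> where \<delta>: "\<delta> > 0" "\<And>n. n \<ge> 1 \<Longrightarrow> \<bar>tail_integral r (m * n) j\<bar> \<le> exp (- (real n - 1) * \<delta>) * I"
    using tail_integral_bound[OF assms] unfolding I_def by blast
  show ?thesis
  proof (rule Lim_null_comparison)
    show "eventually (\<lambda>n. norm (real n powr p * tail_integral r (m * n) j)
        \<le> real n powr p * (exp \<delta> * I * exp (- real n * \<delta>))) sequentially"
      using eventually_ge_at_top[of 1]
    proof eventually_elim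
      case (elim n)
      have "norm (real n powr p * tail_integral r (m * n) j) = real n powr p * \<bar>tail_integral r (m * n) j\<bar>"
        by (simp add: abs_mult)
      also have "\<dots> \<le> real n powr p * (exp (- (real n - 1) * \<delta>) * I)"
        using \<delta>(2)[OF elim] by (intro mult_left_mono) auto
      also have "exp (- (real n - 1) * \<delta>) = exp \<delta> * exp (- real n * \<delta>)"
        by (simp add: algebra_simps flip: exp_add)
      finally show ?case
        by (simp add: mult_ac)
    qed
    show "(\<lambda>n. real n powr p * (exp \<delta> * I * exp (- real n * \<delta>))) \<longlonglongrightarrow> 0"
      using \<delta>(1) by real_asymp
  qed
qed

lemma moment_split:
  assumes n: "n \<ge> 1" and m: "m \<ge> 1" and j: "j \<le> 2"
  shows "real n powr ((real DIM('a) + real j) / 2) * moment (m * n) j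
       = (\<integral>y. rescaled_integrand r m j n y \<partial>lborel)
         + real n powr ((real DIM('a) + real j) / 2) * tail_integral r (m * n) j"
proof -
  have mn: "m * n \<ge> 1"
    using m n by (simp add: Suc_le_eq)
  have "moment (m * n) j = (\<integral>x. indicator (ball xs r) x * moment_integrand (m * n) j x
      + indicator (- ball xs r) x * moment_integrand (m * n) j x \<partial>lborel)"
    unfolding moment_def by (intro Bochner_Integration.integral_cong) (auto simp: indicator_compl algebra_simps)
  also have "\<dots> = (\<integral>x. indicator (ball xs r) x * moment_integrand (m * n) j x \<partial>lborel)
      + tail_integral r (m * n) j"
    unfolding tail_integral_def
    by (intro Bochner_Integration.integral_add integrable_indicator_moment_integrand mn j) auto
  finally show ?thesis
    using integral_ball_eq_integral_rescaled[OF n, where j = j and r = r and m = m]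
    by (simp add: distrib_left)
qed

lemma laplace_asymptotics:
  assumes m: "m \<ge> 1" and j: "j \<le> 2"
  shows "(\<lambda>n. real n powr ((real DIM('a) + real j) / 2) * moment (m * n) j) \<longlonglongrightarrow> gauss_moment m j"
proof -
  obtain r where r: "r > 0" "(\<lambda>n. \<integral>y. rescaled_integrand r m j n y \<partial>lborel) \<longlonglongrightarrow> gauss_moment m j"
    using rescaled_integral_tendsto[OF m j] by blast
  have "(\<lambda>n. (\<integral>y. rescaled_integrand r m j n y \<partial>lborel)
      + real n powr ((real DIM('a) + real j) / 2) * tail_integral r (m * n) j) \<longlonglongrightarrow> gauss_moment m j"
    using tendsto_add[OF r(2) tail_integral_negligible[OF r(1) m j]] by simp
  then show ?thesis
  proof (rule Lim_transform_eventually)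
    show "eventually (\<lambda>n. (\<integral>y. rescaled_integrand r m j n y \<partial>lborel)
        + real n powr ((real DIM('a) + real j) / 2) * tail_integral r (m * n) j
        = real n powr ((real DIM('a) + real j) / 2) * moment (m * n) j) sequentially"
      using eventually_ge_at_top[of 1] by eventually_elim (simp add: moment_split[OF _ m j, where r = r])
  qed
qed

lemma integrable_gauss_integrand:
  assumes "m \<ge> 1" "j \<le> 2"
  shows "integrable lborel (gauss_integrand m j)"
  by (rule rescaled_integral_tendsto[OF assms])

lemma gauss_moment_odd: "gauss_moment m 1 = 0"
proof -
  have "gauss_moment m 1 = \<bar>-1 :: real\<bar> ^ DIM('a) * (\<integral>y. gauss_integrand m 1 (0 + (-1) *\<^sub>R y) \<partial>lborel)"
    unfolding gauss_moment_def by (rule lborel_integral_affine) auto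
  also have "\<dots> = (\<integral>y. - gauss_integrand m 1 y \<partial>lborel)"
  proof -
    interpret Df: bounded_linear Df
      by (rule Df_bounded_linear)
    have "Df (- y) = - Df y" for y
      using Df.scaleR[of "-1" y] by simp
    then show ?thesis
      by (simp add: gauss_integrand_def quad_form_minus)
  qed
  also have "\<dots> = - gauss_moment m 1"
    by (simp add: gauss_moment_def)
  finally show ?thesis
    by simp
qed

lemma gauss_moment_0_pos: "m \<ge> 1 \<Longrightarrow> gauss_moment m 0 > 0"
  unfolding gauss_moment_def
  by (rule lborel_integral_pos_if_pos_on_ball[OF integrable_gauss_integrand, where e = 1 and v = 0])
    (use pi0_xs_pos in \<open>auto simp: gauss_integrand_def\<close>)

lemma gauss_moment_2_pos: "m \<ge> 1 \<Longrightarrow> gauss_moment m 2 > 0"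
proof -
  assume m: "m \<ge> 1"
  obtain v where "Df v \<noteq> 0"
    using grad by (auto simp: fun_eq_iff)
  moreover have "open {y. Df y \<noteq> 0}"
    using linear_continuous_on[OF Df_bounded_linear] by (intro open_Collect_neq) auto
  ultimately obtain e where e: "e > 0" "ball v e \<subseteq> {y. Df y \<noteq> 0}"
    using open_contains_ball by blast
  show ?thesis
    unfolding gauss_moment_def
    by (rule lborel_integral_pos_if_pos_on_ball[OF integrable_gauss_integrand[OF m], where e = e and v = v])
      (use pi0_xs_pos e in \<open>auto simp: gauss_integrand_def\<close>)
qed

end

section \<open>Posterior moments and the importance sampling variance\<close>

context laplace_posterior begin

lemma integral_prior_eq:
  "g \<in> borel_measurable borel \<Longrightarrow> (\<integral>x. g x \<partial>prior pi0) = (\<integral>x. pi0 x * g x \<partial>lborel)"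
  by (rule integral_prior[OF pi0_nonneg pi0_measurable])

lemma exp_Phi_eq_exp_gap: "exp (- k * \<Phi> x) = exp (- k * \<Phi> xs) * exp (- k * gap x)"
  by (simp add: gap_def algebra_simps flip: exp_add)

lemma Zn_eq_moment: "Zn pi0 \<Phi> n = exp (- real n * \<Phi> xs) * moment n 0"
proof -
  have "Zn pi0 \<Phi> n = (\<integral>x. pi0 x * exp (- real n * \<Phi> x) \<partial>lborel)"
    unfolding Zn_def by (rule integral_prior_eq) measurable
  also have "\<dots> = (\<integral>x. exp (- real n * \<Phi> xs) * moment_integrand n 0 x \<partial>lborel)"
  proof (rule Bochner_Integration.integral_cong)
    show "pi0 x * exp (- real n * \<Phi> x) = exp (- real n * \<Phi> xs) * moment_integrand n 0 x" for x
      unfolding moment_integrand_def exp_Phi_eq_exp_gap[of "real n" x] by simp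
  qed simp
  finally show ?thesis
    by (simp add: moment_def)
qed

lemma post_density_eq:
  assumes "moment n 0 > 0"
  shows "exp (- real n * \<Phi> x) / Zn pi0 \<Phi> n = exp (- real n * gap x) / moment n 0"
  using assms unfolding Zn_eq_moment exp_Phi_eq_exp_gap[of "real n" x] by simp

lemma integral_post:
  assumes pos: "moment n 0 > 0" and [measurable]: "g \<in> borel_measurable borel"
  shows "(\<integral>x. g x \<partial>post pi0 \<Phi> n) = (\<integral>x. pi0 x * exp (- real n * gap x) * g x \<partial>lborel) / moment n 0"
proof -
  have "Zn pi0 \<Phi> n > 0"
    using pos by (simp add: Zn_eq_moment)
  then have "(\<integral>x. g x \<partial>post pi0 \<Phi> n) = (\<integral>x. exp (- real n * \<Phi> x) / Zn pi0 \<Phi> n * g x \<partial>prior pi0)"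
    unfolding post_def by (subst integral_density) (auto simp: prior_def)
  also have "\<dots> = (\<integral>x. pi0 x * (exp (- real n * \<Phi> x) / Zn pi0 \<Phi> n * g x) \<partial>lborel)"
    by (rule integral_prior_eq) measurable
  also have "\<dots> = (\<integral>x. pi0 x * exp (- real n * gap x) * g x \<partial>lborel) / moment n 0"
    unfolding post_density_eq[OF pos] by (simp add: mult_ac)
  finally show ?thesis .
qed

lemma integral_post_f:
  assumes "n \<ge> 1" "moment n 0 > 0"
  shows "(\<integral>x. f x \<partial>post pi0 \<Phi> n) = f xs + moment n 1 / moment n 0"
proof -
  have "(\<integral>x. f x \<partial>post pi0 \<Phi> n) = (\<integral>x. pi0 x * exp (- real n * gap x) * f x \<partial>lborel) / moment n 0"
    by (rule integral_post[OF assms(2)]) measurable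
  also have "\<dots> = (moment n 1 + f xs * moment n 0) / moment n 0"
    by (simp only: integral_tilted_f[OF assms(1)])
  finally show ?thesis
    using assms(2) by (simp add: field_simps)
qed

lemma var_meas_post:
  assumes "n \<ge> 1" "moment n 0 > 0"
  shows "var_meas (post pi0 \<Phi> n) f = moment n 2 / moment n 0 - (moment n 1 / moment n 0)\<^sup>2"
proof -
  have "(\<integral>x. (f x)\<^sup>2 \<partial>post pi0 \<Phi> n)
      = (\<integral>x. pi0 x * exp (- real n * gap x) * (f x - 0)\<^sup>2 \<partial>lborel) / moment n 0"
    using integral_post[OF assms(2), of "\<lambda>x. (f x)\<^sup>2"] by simp
  also have "\<dots> = (moment n 2 + 2 * (f xs - 0) * moment n 1 + (f xs - 0)\<^sup>2 * moment n 0) / moment n 0"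
    by (simp only: integral_tilted_square[OF assms(1)])
  finally show ?thesis
    using assms by (simp add: var_meas_def integral_post_f field_simps power2_eq_square)
qed

lemma RN_deriv_prior_post:
  "AE x in prior pi0. RN_deriv (prior pi0) (post pi0 \<Phi> n) x = ennreal (exp (- real n * \<Phi> x) / Zn pi0 \<Phi> n)"
proof -
  interpret prob_space "prior pi0"
    by (rule prob)
  show ?thesis
    by (rule AE_symmetric[OF RN_deriv_unique]) (auto simp: post_def prior_def)
qed

lemma snis_asym_var_post:
  assumes n: "n \<ge> 1" and pos: "moment n 0 > 0"
  defines "e \<equiv> moment n 1 / moment n 0"
  shows "snis_asym_var (post pi0 \<Phi> n) (prior pi0) f
       = (moment (2 * n) 2 - 2 * e * moment (2 * n) 1 + e\<^sup>2 * moment (2 * n) 0) / (moment n 0)\<^sup>2"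
proof -
  define E where "E = (\<integral>x. f x \<partial>post pi0 \<Phi> n)"
  have E: "f xs - E = - e"
    using integral_post_f[OF n pos] by (simp add: E_def e_def)
  have "Zn pi0 \<Phi> n > 0"
    using pos by (simp add: Zn_eq_moment)
  have "snis_asym_var (post pi0 \<Phi> n) (prior pi0) f
      = (\<integral>x. (exp (- real n * \<Phi> x) / Zn pi0 \<Phi> n)\<^sup>2 * (f x - E)\<^sup>2 \<partial>prior pi0)"
    unfolding snis_asym_var_def E_def[symmetric]
  proof (rule integral_cong_AE)
    show "AE x in prior pi0. (enn2real (RN_deriv (prior pi0) (post pi0 \<Phi> n) x))\<^sup>2 * (f x - E)\<^sup>2
        = (exp (- real n * \<Phi> x) / Zn pi0 \<Phi> n)\<^sup>2 * (f x - E)\<^sup>2"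
      using RN_deriv_prior_post[of n] by (elim eventually_mono) (use \<open>Zn pi0 \<Phi> n > 0\<close> in simp)
  qed measurable
  also have "\<dots> = (\<integral>x. pi0 x * exp (- real (2 * n) * gap x) * (f x - E)\<^sup>2 \<partial>lborel) / (moment n 0)\<^sup>2"
  proof -
    have "(exp (- real n * \<Phi> x) / Zn pi0 \<Phi> n)\<^sup>2 = exp (- real (2 * n) * gap x) / (moment n 0)\<^sup>2" for x
    proof -
      have "(exp (- real n * gap x))\<^sup>2 = exp (- real (2 * n) * gap x)"
        by (simp add: power2_eq_square flip: exp_add)
      then show ?thesis
        unfolding post_density_eq[OF pos] by (simp add: power_divide)
    qed
    then show ?thesis
      by (subst integral_prior_eq) (auto simp: mult_ac)
  qed
  finally show ?thesis
    using integral_tilted_square[of "2 * n" E] n by (simp add: E power2_eq_square)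
qed

definition scaled_moment :: "nat \<Rightarrow> nat \<Rightarrow> nat \<Rightarrow> real" where
  "scaled_moment m j n = real n powr ((real DIM('a) + real j) / 2) * moment (m * n) j"

lemma moment_eq_scaled_moment:
  assumes "n \<ge> 1"
  shows "moment (m * n) j = scaled_moment m j n / sqrt (real n) ^ (DIM('a) + j)"
  using assms sqrt_power_eq_powr[of "real n" "DIM('a) + j"] by (simp add: scaled_moment_def add_divide_distrib)

definition snis_factor :: "nat \<Rightarrow> real" where
  "snis_factor n = (scaled_moment 2 2 n - 2 * (scaled_moment 1 1 n / scaled_moment 1 0 n) * scaled_moment 2 1 n
     + (scaled_moment 1 1 n / scaled_moment 1 0 n)\<^sup>2 * scaled_moment 2 0 n) / (scaled_moment 1 0 n)\<^sup>2"

definition var_factor :: "nat \<Rightarrow> real" where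
  "var_factor n = scaled_moment 1 2 n / scaled_moment 1 0 n - (scaled_moment 1 1 n / scaled_moment 1 0 n)\<^sup>2"

lemma snis_asym_var_eq_snis_factor:
  assumes n: "n \<ge> 1" and pos: "scaled_moment 1 0 n > 0"
  shows "snis_asym_var (post pi0 \<Phi> n) (prior pi0) f = real n powr (real DIM('a) / 2 - 1) * snis_factor n"
proof -
  define u where "u = sqrt (real n)"
  have u: "u > 0"
    using n by (simp add: u_def)
  have powr_eq: "real n powr (real DIM('a) / 2 - 1) = u ^ DIM('a) / u\<^sup>2"
    using n sqrt_power_eq_powr[of "real n" "DIM('a)"] by (simp add: u_def powr_diff)
  have M1: "moment n j = scaled_moment 1 j n / u ^ (DIM('a) + j)" for j
    using moment_eq_scaled_moment[OF n, of 1 j] by (simp add: u_def)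
  have M2: "moment (2 * n) j = scaled_moment 2 j n / u ^ (DIM('a) + j)" for j
    using moment_eq_scaled_moment[OF n, of 2 j] by (simp add: u_def)
  have pos0: "moment n 0 > 0"
    using pos u by (simp add: M1)
  show ?thesis
    unfolding snis_asym_var_post[OF n pos0] M1 M2 powr_eq snis_factor_def
    using u pos by (simp add: field_simps power_add power2_eq_square)
qed

lemma var_meas_eq_var_factor:
  assumes n: "n \<ge> 1" and pos: "scaled_moment 1 0 n > 0"
  shows "var_meas (post pi0 \<Phi> n) f = var_factor n / real n"
proof -
  define u where "u = sqrt (real n)"
  have u: "u > 0" "real n = u\<^sup>2"
    using n by (auto simp: u_def)
  have M1: "moment n j = scaled_moment 1 j n / u ^ (DIM('a) + j)" for j
    using moment_eq_scaled_moment[OF n, of 1 j] by (simp add: u_def)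
  have pos0: "moment n 0 > 0"
    using pos u by (simp add: M1)
  show ?thesis
    unfolding var_meas_post[OF n pos0] M1 var_factor_def u(2)
    using u pos by (simp add: field_simps power_add power2_eq_square)
qed

lemma snis_factor_tendsto: "snis_factor \<longlonglongrightarrow> gauss_moment 2 2 / (gauss_moment 1 0)\<^sup>2"
proof -
  have "snis_factor \<longlonglongrightarrow> (gauss_moment 2 2 - 2 * (gauss_moment 1 1 / gauss_moment 1 0) * gauss_moment 2 1
      + (gauss_moment 1 1 / gauss_moment 1 0)\<^sup>2 * gauss_moment 2 0) / (gauss_moment 1 0)\<^sup>2"
    unfolding snis_factor_def[abs_def] scaled_moment_def[abs_def]
    using gauss_moment_0_pos[of 1]
    by (intro tendsto_intros laplace_asymptotics) auto
  then show ?thesis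
    by (simp add: gauss_moment_odd gauss_moment_odd[unfolded One_nat_def])
qed

lemma var_factor_tendsto: "var_factor \<longlonglongrightarrow> gauss_moment 1 2 / gauss_moment 1 0"
proof -
  have "var_factor \<longlonglongrightarrow> gauss_moment 1 2 / gauss_moment 1 0 - (gauss_moment 1 1 / gauss_moment 1 0)\<^sup>2"
    unfolding var_factor_def[abs_def] scaled_moment_def[abs_def]
    using gauss_moment_0_pos[of 1]
    by (intro tendsto_intros laplace_asymptotics) auto
  then show ?thesis
    by (simp add: gauss_moment_odd gauss_moment_odd[unfolded One_nat_def])
qed

lemma gauss_moment_ratios_pos:
  "gauss_moment 2 2 / (gauss_moment 1 0)\<^sup>2 > 0" "gauss_moment 1 2 / gauss_moment 1 0 > 0"
  using gauss_moment_0_pos[of 1] gauss_moment_2_pos[of 1] gauss_moment_2_pos[of 2] by simp_all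

lemma eventually_factors_pos:
  "eventually (\<lambda>n. n \<ge> 1 \<and> scaled_moment 1 0 n > 0 \<and> var_factor n > 0) sequentially"
proof -
  have "scaled_moment 1 0 \<longlonglongrightarrow> gauss_moment 1 0"
    unfolding scaled_moment_def[abs_def] using laplace_asymptotics[of 1 0] by simp
  then show ?thesis
    using gauss_moment_0_pos[of 1] gauss_moment_ratios_pos(2) eventually_ge_at_top[of 1]
      order_tendstoD(1)[OF var_factor_tendsto, of 0]
    by (auto dest: order_tendstoD(1) simp: eventually_conj_iff)
qed

lemma snis_asym_var_asymp_equiv:
  "\<exists>c>0. (\<lambda>n. snis_asym_var (post pi0 \<Phi> n) (prior pi0) f)
           \<sim>[at_top] (\<lambda>n. c * real n powr (real DIM('a) / 2 - 1))"
proof (intro exI conjI)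
  show "(\<lambda>n. snis_asym_var (post pi0 \<Phi> n) (prior pi0) f)
      \<sim>[at_top] (\<lambda>n. gauss_moment 2 2 / (gauss_moment 1 0)\<^sup>2 * real n powr (real DIM('a) / 2 - 1))"
  proof (rule asymp_equiv_const_times[OF snis_factor_tendsto])
    show "eventually (\<lambda>n. snis_asym_var (post pi0 \<Phi> n) (prior pi0) f
        = snis_factor n * real n powr (real DIM('a) / 2 - 1)) sequentially"
      using eventually_factors_pos by eventually_elim (simp add: snis_asym_var_eq_snis_factor)
  qed (use gauss_moment_ratios_pos(1) in linarith)
qed (rule gauss_moment_ratios_pos(1))

lemma snis_var_ratio_asymp_equiv:
  "\<exists>c>0. (\<lambda>n. snis_asym_var (post pi0 \<Phi> n) (prior pi0) f / var_meas (post pi0 \<Phi> n) f)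
           \<sim>[at_top] (\<lambda>n. c * real n powr (real DIM('a) / 2))"
proof (intro exI conjI)
  define c where "c = gauss_moment 2 2 / (gauss_moment 1 0)\<^sup>2 / (gauss_moment 1 2 / gauss_moment 1 0)"
  show "c > 0"
    unfolding c_def by (intro divide_pos_pos gauss_moment_ratios_pos)
  show "(\<lambda>n. snis_asym_var (post pi0 \<Phi> n) (prior pi0) f / var_meas (post pi0 \<Phi> n) f)
      \<sim>[at_top] (\<lambda>n. c * real n powr (real DIM('a) / 2))"
  proof (rule asymp_equiv_const_times)
    show "(\<lambda>n. snis_factor n / var_factor n) \<longlonglongrightarrow> c"
      unfolding c_def using gauss_moment_ratios_pos(2)
      by (intro tendsto_divide snis_factor_tendsto var_factor_tendsto) linarith
    show "eventually (\<lambda>n. snis_asym_var (post pi0 \<Phi> n) (prior pi0) f / var_meas (post pi0 \<Phi> n) f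
        = snis_factor n / var_factor n * real n powr (real DIM('a) / 2)) sequentially"
      using eventually_factors_pos
    proof eventually_elim
      case (elim n)
      have "real n powr (real DIM('a) / 2) = real n powr (real DIM('a) / 2 - 1) * real n"
        using elim by (simp add: powr_diff)
      then show ?case
        using elim by (simp add: snis_asym_var_eq_snis_factor var_meas_eq_var_factor)
    qed
  qed (use \<open>c > 0\<close> in simp)
qed

end

theorem lemma2:
  fixes pi0 \<Phi> f :: "'a::euclidean_space \<Rightarrow> real" and xs :: 'a
  assumes pi0_nonneg: "\<And>x. pi0 x \<ge> 0"
    and prob: "prob_space (prior pi0)"
    and pi0_C4: "Ck_on 4 UNIV pi0"
    and Phi_meas: "\<Phi> \<in> borel_measurable borel"
    and xs_int: "xs \<in> interior {x. pi0 x > 0}"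
    and sep: "\<And>r. r > 0 \<Longrightarrow> \<exists>\<delta>>0. \<forall>x\<in>{x. pi0 x > 0}. dist x xs > r \<longrightarrow> \<Phi> x - \<Phi> xs \<ge> \<delta>"
    and Phi_C5: "\<exists>U. open U \<and> xs \<in> U \<and> Ck_on 5 U \<Phi>"
    and hess: "hessian_pos_def \<Phi> xs"
    and pi0_xs: "pi0 xs \<noteq> 0"
    and f_C4: "Ck_on 4 UNIV f"
    and f_L1: "integrable (prior pi0) f"
    and grad: "frechet_derivative f (at xs) \<noteq> (\<lambda>_. 0)"
    and fin: "\<And>n g. n \<ge> 1 \<Longrightarrow> g \<in> {pi0, (\<lambda>x. f x * pi0 x), (\<lambda>x. (f x)\<^sup>2 * pi0 x)} \<Longrightarrow>
               set_integrable lborel {x. pi0 x > 0} (\<lambda>x. g x * exp (- real n * \<Phi> x))"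
  shows "(\<exists>c>0. (\<lambda>n. snis_asym_var (post pi0 \<Phi> n) (prior pi0) f)
                 \<sim>[at_top] (\<lambda>n. c * real n powr (real DIM('a) / 2 - 1)))
       \<and> (\<exists>c'>0. (\<lambda>n. snis_asym_var (post pi0 \<Phi> n) (prior pi0) f / var_meas (post pi0 \<Phi> n) f)
                 \<sim>[at_top] (\<lambda>n. c' * real n powr (real DIM('a) / 2)))"
proof -
  obtain U where U: "open U" "xs \<in> U" "Ck_on 5 U \<Phi>"
    using Phi_C5 by blast
  have "Ck_on 2 U \<Phi>"
    by (rule Ck_on_mono[OF U(3)]) simp
  moreover have "Ck_on 1 UNIV f"
    by (rule Ck_on_mono[OF f_C4]) simp
  ultimately interpret laplace_posterior pi0 \<Phi> f xs U
    using Ck_on_imp_continuous_on[OF pi0_C4]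
    by (intro laplace_posterior.intro pi0_nonneg prob Phi_meas xs_int sep U(1,2) hess grad fin) simp_all
  show ?thesis
    using snis_asym_var_asymp_equiv snis_var_ratio_asymp_equiv by blast
qed

end
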